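(* Under Assumptions 1, 2, 3 and 4 (stated in the context), for every node $i\in[n]$ and every $\alpha>0$, $$\lim_{t\to\infty}\frac1t\log\mathsf P\Big(-\frac1t\log q_i^{(t)}(\theta_M)\ge\alpha\Big)\le-\min_{k\in[M-1]}\frac{K(\theta_M,\theta_k)^2}{2L^2d},$$ where $d$ is the period of $W$.
   Context: There are $n$ nodes and a finite set of hypotheses $\Theta=\{\theta_1,\dots,\theta_M\}$. Node $i$ has an observation space $\mathcal{X}_i$; $\mathcal{X}=\mathcal{X}_1\times\cdots\times\mathcal{X}_n$. For each $k\in[M]$, $f(\cdot;\theta_k)$ is a joint probability distribution on $\mathcal{X}$ with $i$-th marginal $f_i(\cdot;\theta_k)$. The true hypothesis is $\theta_M$: the observation profiles $X^{(t)}=(X_1^{(t)},\dots,X_n^{(t)})$, $t=1,2,\dots$, are i.i.d. over $t$ with law $f(\cdot;\theta_M)$ (components may be dependent). $\mathsf{P}$ is the induced probability measure; $D(\cdot\|\cdot)$ is KL divergence. $W$ is an $n\times n$ row-stochastic nonnegative matrix with, for $j\ne i$, $W_{ij}>0$ iff there is a directed edge from $j$ to $i$ in the communication graph. Learning rule: initial private beliefs $\mathbf q_i^{(0)}$ (probability vectors on $\Theta$); for $t\ge1$, $k\in[M]$: $b_i^{(t)}(\theta_k)=\frac{f_i(X_i^{(t)};\theta_k)q_i^{(t-1)}(\theta_k)}{\sum_{a}f_i(X_i^{(t)};\theta_a)q_i^{(t-1)}(\theta_a)}$ and $q_i^{(t)}(\theta_k)=\frac{\exp(\sum_j W_{ij}\log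 b_j^{(t)}(\theta_k))}{\sum_a\exp(\sum_j W_{ij}\log b_j^{(t)}(\theta_a))}$. Assumption 1: for every $k\ne j$ there is a node $i$ with $D(f_i(\cdot;\theta_k)\|f_i(\cdot;\theta_j))>0$. Assumption 2: the communication graph is strongly connected ($W$ irreducible). Assumption 3: $q_i^{(0)}(\theta_k)>0$ for all $i,k$. Assumption 4: there is $L>0$ with $\max_{i}\max_{j,k\in[M]}\sup_{x\in\mathcal X_i}\big|\log\frac{f_i(x;\theta_j)}{f_i(x;\theta_k)}\big|\le L$. $d$ is the period of the irreducible Markov chain with transition matrix $W$. $\mathbf v$ is the stationary distribution of $W$ and $K(\theta_M,\theta_k)=\sum_{i=1}^n v_iD(f_i(\cdot;\theta_M)\|f_i(\cdot;\theta_k))$. *)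

theory Defs
  imports "HOL-Probability.Probability"
begin

text \<open>Nodes are indexed by 0..n-1, hypotheses by 1..M (true hypothesis: M).\<close>

fun matpow :: "nat \<Rightarrow> (nat \<Rightarrow> nat \<Rightarrow> real) \<Rightarrow> nat \<Rightarrow> nat \<Rightarrow> nat \<Rightarrow> real" where
  "matpow n W 0 i j = (if i = j then 1 else 0)"
| "matpow n W (Suc t) i j = (\<Sum>l<n. matpow n W t i l * W l j)"

definition row_stochastic :: "nat \<Rightarrow> (nat \<Rightarrow> nat \<Rightarrow> real) \<Rightarrow> bool" where
  "row_stochastic n W \<longleftrightarrow>
     (\<forall>i<n. \<forall>j<n. 0 \<le> W i j) \<and> (\<forall>i<n. (\<Sum>j<n. W i j) = 1)"

definition irreducible_mat :: "nat \<Rightarrow> (nat \<Rightarrow> nat \<Rightarrow> real) \<Rightarrow> bool" where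
  "irreducible_mat n W \<longleftrightarrow> (\<forall>i<n. \<forall>j<n. \<exists>t. 0 < matpow n W t i j)"

text \<open>Period of the Markov chain: gcd of all return times t \<ge> 1 with (W^t)_ii > 0.
  For an irreducible chain this is the common period of every state.\<close>
definition chain_period :: "nat \<Rightarrow> (nat \<Rightarrow> nat \<Rightarrow> real) \<Rightarrow> nat" where
  "chain_period n W = Gcd {t. 1 \<le> t \<and> (\<exists>i<n. 0 < matpow n W t i i)}"

definition stationary_dist :: "nat \<Rightarrow> (nat \<Rightarrow> nat \<Rightarrow> real) \<Rightarrow> (nat \<Rightarrow> real) \<Rightarrow> bool" where
  "stationary_dist n W v \<longleftrightarrow>
     (\<forall>i<n. 0 \<le> v i) \<and> (\<Sum>i<n. v i) = 1 \<and> (\<forall>j<n. (\<Sum>i<n. v i * W i j) = v j)"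

text \<open>KL divergence D(f_i(.;theta_a) || f_i(.;theta_b)) (natural log), where
  f i k is the density of f_i(.;theta_k) w.r.t. the base measure mu i.\<close>
definition KLD :: "(nat \<Rightarrow> 'a measure) \<Rightarrow> (nat \<Rightarrow> nat \<Rightarrow> 'a \<Rightarrow> real) \<Rightarrow> nat \<Rightarrow> nat \<Rightarrow> nat \<Rightarrow> real" where
  "KLD \<mu> f i a b = KL_divergence (exp 1) (density (\<mu> i) (\<lambda>x. ennreal (f i b x)))
                                          (density (\<mu> i) (\<lambda>x. ennreal (f i a x)))"

definition Kdiv :: "nat \<Rightarrow> (nat \<Rightarrow> real) \<Rightarrow> (nat \<Rightarrow> 'a measure) \<Rightarrow> (nat \<Rightarrow> nat \<Rightarrow> 'a \<Rightarrow> real)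
                    \<Rightarrow> nat \<Rightarrow> nat \<Rightarrow> real" where
  "Kdiv n v \<mu> f M k = (\<Sum>i<n. v i * KLD \<mu> f i M k)"

definition priv_belief :: "nat \<Rightarrow> (nat \<Rightarrow> nat \<Rightarrow> 'a \<Rightarrow> real) \<Rightarrow> (nat \<Rightarrow> nat \<Rightarrow> real)
                           \<Rightarrow> (nat \<Rightarrow> 'a) \<Rightarrow> nat \<Rightarrow> nat \<Rightarrow> real" where
  "priv_belief M f q x j k =
     f j k (x j) * q j k / (\<Sum>a\<in>{1..M}. f j a (x j) * q j a)"

definition agg_belief :: "nat \<Rightarrow> nat \<Rightarrow> (nat \<Rightarrow> nat \<Rightarrow> real) \<Rightarrow> (nat \<Rightarrow> nat \<Rightarrow> real)
                          \<Rightarrow> nat \<Rightarrow> nat \<Rightarrow> real" where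
  "agg_belief n M W b i k =
     exp (\<Sum>j<n. W i j * ln (b j k)) / (\<Sum>a\<in>{1..M}. exp (\<Sum>j<n. W i j * ln (b j a)))"

text \<open>Beliefs q_i^{(t)}(theta_k) along an observation path xs (xs t = profile X^{(t)}, t \<ge> 1).\<close>
primrec belief :: "nat \<Rightarrow> nat \<Rightarrow> (nat \<Rightarrow> nat \<Rightarrow> real) \<Rightarrow> (nat \<Rightarrow> nat \<Rightarrow> 'a \<Rightarrow> real)
                   \<Rightarrow> (nat \<Rightarrow> nat \<Rightarrow> real) \<Rightarrow> (nat \<Rightarrow> nat \<Rightarrow> 'a) \<Rightarrow> nat \<Rightarrow> nat \<Rightarrow> nat \<Rightarrow> real" where
  "belief n M W f q0 xs 0 = q0"
| "belief n M W f q0 xs (Suc t) =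
     agg_belief n M W (priv_belief M f (belief n M W f q0 xs t) (xs (Suc t)))"

definition eln :: "real \<Rightarrow> ereal" where
  "eln p = (if p \<le> 0 then -\<infinity> else ereal (ln p))"

end

theory Submission
  imports Defs
begin

text \<open>
Unrolling the log-linear update, the log-ratio ln q_i(t, k) - ln q_i(t, M) is the initial log-ratio
smoothed by W^t plus, for every time u \<le> t, the local log-likelihood ratios of the observation
X(u) weighted by row i of W^(t-u+1). If q_i(t, M) \<le> exp(-\<alpha> t) \<le> 1/2, some false hypothesis
keeps belief at least 1/(2(M-1)), so for that k the weighted sum is at least \<alpha> t - O(1). Its
summands are independent and bounded by L, and its mean is -t times a Cesaro average of the rows
i of W, ..., W^t applied to the divergences; for irreducible W (of any period) these averages
converge to the stationary average K(\<theta>_M, \<theta>_k), by a compactness argument and the maximum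
principle for W-harmonic vectors. Hoeffding's inequality and a union bound over k then give,
for large t, the probability bound (M-1) exp(-t min_k (K + \<alpha>/2)^2 / (2 L^2)), whose rate
dominates the claimed one since d \<ge> 1 (and d = 0 makes the claim trivial).
\<close>

section \<open>Powers of stochastic matrices\<close>

lemma sum_matpow_0: "i < n \<Longrightarrow> (\<Sum>j<n. matpow n W 0 i j * h j) = h i"
  by (simp add: if_distrib[of "\<lambda>c. c * h _"] cong: if_cong)

lemma matpow_Suc_left:
  assumes "i < n" and "j < n"
  shows "matpow n W (Suc t) i j = (\<Sum>l<n. W i l * matpow n W t l j)"
  using assms(2)
proof (induction t arbitrary: j)
  case 0
  have "(\<Sum>l<n. (if i = l then 1 else 0) * W l j) = W i j"
    using assms(1) by (simp add: if_distrib[of "\<lambda>c. c * W _ j"] cong: if_cong)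
  then show ?case using 0 by (simp add: if_distrib[of "\<lambda>c. W i _ * c"] cong: if_cong)
next
  case (Suc t)
  have "matpow n W (Suc (Suc t)) i j = (\<Sum>l<n. (\<Sum>m<n. W i m * matpow n W t m l) * W l j)"
    using Suc.IH by (auto intro: sum.cong)
  also have "\<dots> = (\<Sum>l<n. \<Sum>m<n. W i m * (matpow n W t m l * W l j))"
    by (simp add: sum_distrib_right mult.assoc)
  also have "\<dots> = (\<Sum>m<n. W i m * matpow n W (Suc t) m j)"
    by (subst sum.swap) (simp add: sum_distrib_left)
  finally show ?case .
qed

lemma sum_mult_matpow:
  assumes "i < n"
  shows "(\<Sum>j<n. W i j * (\<Sum>l<n. matpow n W t j l * h l)) = (\<Sum>l<n. matpow n W (Suc t) i l * h l)"
proof -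
  have "(\<Sum>j<n. W i j * (\<Sum>l<n. matpow n W t j l * h l)) = (\<Sum>j<n. \<Sum>l<n. W i j * matpow n W t j l * h l)"
    by (simp add: sum_distrib_left mult.assoc)
  also have "\<dots> = (\<Sum>l<n. (\<Sum>j<n. W i j * matpow n W t j l) * h l)"
    by (subst sum.swap) (simp add: sum_distrib_right)
  also have "\<dots> = (\<Sum>l<n. matpow n W (Suc t) i l * h l)"
    using matpow_Suc_left[OF assms] by simp
  finally show ?thesis .
qed

locale stochastic_matrix =
  fixes n :: nat and W :: "nat \<Rightarrow> nat \<Rightarrow> real"
  assumes row_stochastic: "row_stochastic n W"
begin

lemma nonneg: "a < n \<Longrightarrow> b < n \<Longrightarrow> 0 \<le> W a b"
  using row_stochastic unfolding row_stochastic_def by auto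

lemma row_sum: "a < n \<Longrightarrow> (\<Sum>b<n. W a b) = 1"
  using row_stochastic unfolding row_stochastic_def by auto

lemma matpow_nonneg: "j < n \<Longrightarrow> 0 \<le> matpow n W t i j"
  by (induction t arbitrary: j) (auto intro!: sum_nonneg mult_nonneg_nonneg nonneg)

lemma matpow_row_sum: "i < n \<Longrightarrow> (\<Sum>j<n. matpow n W t i j) = 1"
proof (induction t)
  case 0
  then show ?case by simp
next
  case (Suc t)
  have "(\<Sum>j<n. matpow n W (Suc t) i j) = (\<Sum>l<n. \<Sum>j<n. matpow n W t i l * W l j)"
    unfolding matpow.simps by (rule sum.swap)
  also have "\<dots> = (\<Sum>l<n. matpow n W t i l)"
    by (simp add: sum_distrib_left[symmetric] row_sum)
  finally show ?case using Suc by simp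
qed

lemma abs_sum_matpow_le:
  assumes "i < n" and bound: "\<And>j. j < n \<Longrightarrow> \<bar>h j\<bar> \<le> B"
  shows "\<bar>\<Sum>j<n. matpow n W t i j * h j\<bar> \<le> B"
proof -
  have "\<bar>\<Sum>j<n. matpow n W t i j * h j\<bar> \<le> (\<Sum>j<n. matpow n W t i j * B)"
    by (rule order_trans[OF sum_abs sum_mono])
      (simp add: abs_mult matpow_nonneg bound mult_left_mono)
  also have "\<dots> = B"
    by (simp add: sum_distrib_right[symmetric] matpow_row_sum assms)
  finally show ?thesis .
qed

lemma abs_sum_matpow_le_sum_abs:
  "i < n \<Longrightarrow> \<bar>\<Sum>j<n. matpow n W t i j * h j\<bar> \<le> (\<Sum>j<n. \<bar>h j\<bar>)"
  by (rule abs_sum_matpow_le) (auto intro: member_le_sum)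

lemma stationary_matpow:
  assumes "stationary_dist n W v" and "j < n"
  shows "(\<Sum>i<n. v i * matpow n W t i j) = v j"
  using assms(2)
proof (induction t arbitrary: j)
  case 0
  then show ?case by (simp add: if_distrib cong: if_cong)
next
  case (Suc t)
  have "(\<Sum>i<n. v i * matpow n W (Suc t) i j) = (\<Sum>i<n. \<Sum>l<n. v i * (matpow n W t i l * W l j))"
    by (simp add: sum_distrib_left)
  also have "\<dots> = (\<Sum>l<n. (\<Sum>i<n. v i * matpow n W t i l) * W l j)"
    by (subst sum.swap) (simp add: sum_distrib_right mult.assoc)
  also have "\<dots> = v j"
    using Suc assms(1) unfolding stationary_dist_def by simp
  finally show ?case .
qed

end

section \<open>Cesaro averages of the powers of an irreducible stochastic matrix\<close>

lemma bounded_family_convergent_subseq: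
  fixes g :: "nat \<Rightarrow> nat \<Rightarrow> real"
  assumes "\<And>t j. j < m \<Longrightarrow> \<bar>g t j\<bar> \<le> B"
  shows "\<exists>\<sigma>. strict_mono \<sigma> \<and> (\<forall>j<m. convergent (\<lambda>t. g (\<sigma> t) j))"
  using assms
proof (induction m)
  case 0
  show ?case by (rule exI[of _ id]) (auto simp: strict_mono_def)
next
  case (Suc m)
  then obtain \<sigma> where \<sigma>: "strict_mono \<sigma>" "\<forall>j<m. convergent (\<lambda>t. g (\<sigma> t) j)" by auto
  have "bounded (range (\<lambda>t. g (\<sigma> t) m))"
    using Suc.prems by (intro boundedI[of _ B]) auto
  then obtain l \<tau> where \<tau>: "strict_mono (\<tau> :: nat \<Rightarrow> nat)" "((\<lambda>t. g (\<sigma> t) m) \<circ> \<tau>) \<longlonglongrightarrow> l"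
    using bounded_imp_convergent_subsequence by blast
  have "convergent (\<lambda>t. g (\<sigma> (\<tau> t)) j)" if "j < Suc m" for j
  proof (cases "j = m")
    case True
    then show ?thesis using \<tau>(2) by (auto simp: convergent_def o_def)
  next
    case False
    then have "convergent (\<lambda>t. g (\<sigma> t) j)" using \<sigma>(2) that by auto
    from convergent_subseq_convergent[OF this \<tau>(1)] show ?thesis by (simp add: o_def)
  qed
  then show ?case
    using strict_mono_o[OF \<sigma>(1) \<tau>(1)] by (intro exI[of _ "\<sigma> \<circ> \<tau>"]) (simp add: o_def)
qed

definition cesaro_avg :: "nat \<Rightarrow> (nat \<Rightarrow> nat \<Rightarrow> real) \<Rightarrow> (nat \<Rightarrow> real) \<Rightarrow> nat \<Rightarrow> nat \<Rightarrow> real" where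
  "cesaro_avg n W h t a = (\<Sum>r<t. \<Sum>j<n. matpow n W (Suc r) a j * h j) / real t"

lemma sum_matpow_reversed_eq_cesaro_avg:
  "(\<Sum>u\<in>{1..t}. \<Sum>j<n. matpow n W (Suc (t - u)) i j * h j) = real t * cesaro_avg n W h t i"
proof -
  have "(\<Sum>u\<in>{1..t}. \<Sum>j<n. matpow n W (Suc (t - u)) i j * h j) = (\<Sum>r<t. \<Sum>j<n. matpow n W (Suc r) i j * h j)"
    by (rule sum.reindex_bij_witness[of _ "\<lambda>r. t - r" "\<lambda>u. t - u"]) auto
  then show ?thesis unfolding cesaro_avg_def by simp
qed

context stochastic_matrix
begin

lemma cesaro_avg_bound:
  assumes "a < n"
  shows "\<bar>cesaro_avg n W h t a\<bar> \<le> (\<Sum>j<n. \<bar>h j\<bar>)"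
proof -
  have "\<bar>\<Sum>r<t. \<Sum>j<n. matpow n W (Suc r) a j * h j\<bar> \<le> (\<Sum>r<t. \<Sum>j<n. \<bar>h j\<bar>)"
    by (rule order_trans[OF sum_abs sum_mono]) (rule abs_sum_matpow_le_sum_abs[OF assms])
  then show ?thesis
    unfolding cesaro_avg_def by (cases "t = 0") (auto simp: abs_divide field_simps)
qed

lemma cesaro_avg_stationary:
  assumes stat: "stationary_dist n W v" and "0 < t"
  shows "(\<Sum>a<n. v a * cesaro_avg n W h t a) = (\<Sum>j<n. v j * h j)"
proof -
  have step: "(\<Sum>a<n. v a * (\<Sum>j<n. matpow n W r a j * h j)) = (\<Sum>j<n. v j * h j)" for r
  proof -
    have "(\<Sum>a<n. v a * (\<Sum>j<n. matpow n W r a j * h j)) = (\<Sum>a<n. \<Sum>j<n. v a * matpow n W r a j * h j)"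
      by (simp add: sum_distrib_left mult.assoc)
    also have "\<dots> = (\<Sum>j<n. (\<Sum>a<n. v a * matpow n W r a j) * h j)"
      by (subst sum.swap) (simp add: sum_distrib_right)
    finally show ?thesis using stationary_matpow[OF stat] by simp
  qed
  have "(\<Sum>a<n. v a * cesaro_avg n W h t a) = (\<Sum>r<t. \<Sum>a<n. v a * (\<Sum>j<n. matpow n W (Suc r) a j * h j)) / real t"
    unfolding cesaro_avg_def
    by (simp add: sum_divide_distrib sum_distrib_left) (rule sum.swap)
  also have "\<dots> = (\<Sum>j<n. v j * h j)" using \<open>0 < t\<close> by (simp add: step del: matpow.simps)
  finally show ?thesis .
qed

text \<open>Applying W to the average of W, ..., W^t h shifts it to W^2, ..., W^(t+1) h; only the two
  end terms survive in the difference.\<close>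
lemma cesaro_avg_harmonic_defect:
  assumes "a < n"
  shows "\<bar>(\<Sum>b<n. W a b * cesaro_avg n W h t b) - cesaro_avg n W h t a\<bar> \<le> 2 * (\<Sum>j<n. \<bar>h j\<bar>) / real t"
proof -
  define F where "F r = (\<Sum>j<n. matpow n W r a j * h j)" for r
  have "(\<Sum>b<n. W a b * cesaro_avg n W h t b) = (\<Sum>r<t. \<Sum>b<n. W a b * (\<Sum>j<n. matpow n W (Suc r) b j * h j)) / real t"
    unfolding cesaro_avg_def
    by (simp add: sum_divide_distrib sum_distrib_left) (rule sum.swap)
  also have "\<dots> = (\<Sum>r<t. F (Suc (Suc r))) / real t"
    unfolding F_def by (simp only: sum_mult_matpow[OF assms])
  also have "(\<Sum>r<t. F (Suc (Suc r))) = (\<Sum>r<t. F (Suc r)) + (F (Suc t) - F 1)"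
    by (induction t) auto
  finally have "(\<Sum>b<n. W a b * cesaro_avg n W h t b) - cesaro_avg n W h t a = (F (Suc t) - F 1) / real t"
    unfolding cesaro_avg_def F_def by (simp add: add_divide_distrib)
  moreover have "\<bar>F (Suc t) - F 1\<bar> \<le> 2 * (\<Sum>j<n. \<bar>h j\<bar>)"
    using abs_sum_matpow_le_sum_abs[OF assms, of "Suc t" h] abs_sum_matpow_le_sum_abs[OF assms, of 1 h]
    unfolding F_def by linarith
  ultimately show ?thesis by (simp add: abs_divide divide_right_mono)
qed

end

locale irreducible_stochastic_matrix = stochastic_matrix +
  assumes irreducible: "irreducible_mat n W"
begin

text \<open>Maximum principle: at a maximum, harmonicity forces every W-successor to be a maximum too,
  and irreducibility lets the maximum spread to all states.\<close>
lemma harmonic_max_spreads: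
  assumes harmonic: "\<And>a. a < n \<Longrightarrow> (\<Sum>b<n. W a b * \<gamma> b) = \<gamma> a"
    and "a0 < n" and max: "\<And>b. b < n \<Longrightarrow> \<gamma> b \<le> \<gamma> a0"
    and "l < n"
  shows "\<gamma> l = \<gamma> a0"
proof -
  have successor: "\<gamma> l = \<gamma> a0" if "p < n" "\<gamma> p = \<gamma> a0" "0 < W p l" "l < n" for p l
  proof -
    have "(\<Sum>b<n. W p b * (\<gamma> a0 - \<gamma> b)) = \<gamma> a0 * (\<Sum>b<n. W p b) - (\<Sum>b<n. W p b * \<gamma> b)"
      by (simp add: algebra_simps sum_subtractf sum_distrib_left)
    also have "\<dots> = 0" using harmonic row_sum that by simp
    finally have "\<forall>b\<in>{..<n}. W p b * (\<gamma> a0 - \<gamma> b) = 0"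
      by (subst (asm) sum_nonneg_eq_0_iff) (auto intro!: mult_nonneg_nonneg nonneg max that)
    then have "W p l * (\<gamma> a0 - \<gamma> l) = 0" using that(4) by blast
    then show ?thesis using that by simp
  qed
  have "\<gamma> l = \<gamma> a0" if "l < n" "0 < matpow n W t a0 l" for t l
    using that
  proof (induction t arbitrary: l)
    case 0
    then show ?case by (simp split: if_splits)
  next
    case (Suc t)
    then have "0 < (\<Sum>p<n. matpow n W t a0 p * W p l)" by simp
    then obtain p where p: "p < n" "0 < matpow n W t a0 p * W p l"
      by (metis (no_types, lifting) lessThan_iff not_le sum_nonpos)
    moreover have "0 \<le> matpow n W t a0 p" "0 \<le> W p l"
      using matpow_nonneg nonneg p(1) Suc.prems(1) by auto
    ultimately have "0 < matpow n W t a0 p" "0 < W p l"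
      by (auto simp: zero_less_mult_iff)
    then show ?case using Suc.IH p(1) successor Suc.prems(1) by blast
  qed
  then show ?thesis
    using irreducible \<open>a0 < n\<close> \<open>l < n\<close> unfolding irreducible_mat_def by blast
qed

lemma harmonic_eq_stationary_mean:
  assumes harmonic: "\<And>a. a < n \<Longrightarrow> (\<Sum>b<n. W a b * \<gamma> b) = \<gamma> a"
    and stat: "stationary_dist n W v" and "a < n"
  shows "\<gamma> a = (\<Sum>b<n. v b * \<gamma> b)"
proof -
  obtain a0 where a0: "a0 < n" "\<gamma> a0 = Max (\<gamma> ` {..<n})"
    using Max_in[of "\<gamma> ` {..<n}"] \<open>a < n\<close> by fastforce
  then have const: "\<gamma> b = \<gamma> a0" if "b < n" for b
    using harmonic_max_spreads[OF harmonic a0(1) _ that] by simp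
  have "(\<Sum>b<n. v b * \<gamma> b) = (\<Sum>b<n. v b) * \<gamma> a0"
    by (simp add: const sum_distrib_right)
  then show ?thesis using stat const \<open>a < n\<close> unfolding stationary_dist_def by simp
qed

lemma cesaro_avg_limit_point:
  assumes stat: "stationary_dist n W v" and "i < n" and "strict_mono \<psi>"
    and lim: "\<And>a. a < n \<Longrightarrow> (\<lambda>t. cesaro_avg n W h (\<psi> t) a) \<longlonglongrightarrow> \<gamma> a"
  shows "\<gamma> i = (\<Sum>j<n. v j * h j)"
proof -
  have harmonic: "(\<Sum>b<n. W a b * \<gamma> b) = \<gamma> a" if "a < n" for a
  proof -
    have "(\<lambda>t. (\<Sum>b<n. W a b * cesaro_avg n W h (\<psi> t) b) - cesaro_avg n W h (\<psi> t) a)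
            \<longlonglongrightarrow> (\<Sum>b<n. W a b * \<gamma> b) - \<gamma> a"
      using lim that by (intro tendsto_intros) auto
    moreover have "(\<lambda>t. (\<Sum>b<n. W a b * cesaro_avg n W h (\<psi> t) b) - cesaro_avg n W h (\<psi> t) a) \<longlonglongrightarrow> 0"
    proof (rule Lim_null_comparison)
      show "(\<lambda>t. 2 * (\<Sum>j<n. \<bar>h j\<bar>) / real (\<psi> t)) \<longlonglongrightarrow> 0"
        by (intro tendsto_divide_0[OF tendsto_const] filterlim_at_top_imp_at_infinity
            filterlim_compose[OF filterlim_real_sequentially filterlim_subseq[OF \<open>strict_mono \<psi>\<close>]])
      show "\<forall>\<^sub>F t in sequentially. norm ((\<Sum>b<n. W a b * cesaro_avg n W h (\<psi> t) b) - cesaro_avg n W h (\<psi> t) a)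
              \<le> 2 * (\<Sum>j<n. \<bar>h j\<bar>) / real (\<psi> t)"
        using cesaro_avg_harmonic_defect[OF that] by simp
    qed
    ultimately show ?thesis using LIMSEQ_unique by fastforce
  qed
  have "(\<lambda>t. \<Sum>a<n. v a * cesaro_avg n W h (\<psi> t) a) \<longlonglongrightarrow> (\<Sum>a<n. v a * \<gamma> a)"
    using lim by (intro tendsto_intros) auto
  moreover have "\<forall>\<^sub>F t in sequentially. (\<Sum>a<n. v a * cesaro_avg n W h (\<psi> t) a) = (\<Sum>j<n. v j * h j)"
    using eventually_gt_at_top[of 0]
  proof eventually_elim
    case (elim t)
    then have "0 < \<psi> t" using seq_suble[OF \<open>strict_mono \<psi>\<close>, of t] by simp
    then show ?case by (rule cesaro_avg_stationary[OF stat])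
  qed
  ultimately have "(\<lambda>t. \<Sum>j<n. v j * h j) \<longlonglongrightarrow> (\<Sum>a<n. v a * \<gamma> a)"
    using tendsto_cong by force
  then have "(\<Sum>a<n. v a * \<gamma> a) = (\<Sum>j<n. v j * h j)"
    by (simp add: LIMSEQ_const_iff)
  then show ?thesis using harmonic_eq_stationary_mean[OF harmonic stat \<open>i < n\<close>] by simp
qed

lemma cesaro_avg_eventually_ge:
  assumes stat: "stationary_dist n W v" and "i < n" and "0 < \<epsilon>"
  shows "\<forall>\<^sub>F t in sequentially. (\<Sum>j<n. v j * h j) - \<epsilon> \<le> cesaro_avg n W h t i"
proof (rule ccontr)
  assume "\<not> ?thesis"
  then have "infinite {t. cesaro_avg n W h t i < (\<Sum>j<n. v j * h j) - \<epsilon>}"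
    by (simp add: not_eventually not_le frequently_cofinite[symmetric] cofinite_eq_sequentially)
  then obtain \<phi> :: "nat \<Rightarrow> nat" where \<phi>: "strict_mono \<phi>" "\<And>t. cesaro_avg n W h (\<phi> t) i < (\<Sum>j<n. v j * h j) - \<epsilon>"
    using infinite_enumerate by blast
  obtain \<sigma> where \<sigma>: "strict_mono \<sigma>" "\<forall>a<n. convergent (\<lambda>t. cesaro_avg n W h (\<phi> (\<sigma> t)) a)"
    using bounded_family_convergent_subseq[of n "\<lambda>t. cesaro_avg n W h (\<phi> t)"] cesaro_avg_bound by blast
  define \<gamma> where "\<gamma> a = lim (\<lambda>t. cesaro_avg n W h (\<phi> (\<sigma> t)) a)" for a
  have lim: "(\<lambda>t. cesaro_avg n W h ((\<phi> \<circ> \<sigma>) t) a) \<longlonglongrightarrow> \<gamma> a" if "a < n" for a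
    using \<sigma>(2) that unfolding \<gamma>_def by (simp add: convergent_LIMSEQ_iff)
  have "\<gamma> i = (\<Sum>j<n. v j * h j)"
    using cesaro_avg_limit_point[OF stat \<open>i < n\<close> strict_mono_o[OF \<phi>(1) \<sigma>(1)] lim] .
  moreover have "\<gamma> i \<le> (\<Sum>j<n. v j * h j) - \<epsilon>"
    using lim[OF \<open>i < n\<close>] \<phi>(2) by (intro LIMSEQ_le_const2) (auto intro: less_imp_le)
  ultimately show False using \<open>0 < \<epsilon>\<close> by simp
qed

end

lemma exists_ge_average:
  fixes p :: "'a \<Rightarrow> real"
  assumes "finite A" and "A \<noteq> {}"
  obtains a where "a \<in> A" and "sum p A / card A \<le> p a"
proof (rule ccontr)
  assume "\<not> thesis"
  then have "\<forall>a\<in>A. p a < sum p A / card A" using that by force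
  then have "sum p A < (\<Sum>a\<in>A. sum p A / card A)"
    using assms by (intro sum_strict_mono) auto
  then show False using assms by simp
qed

lemma limsup_eln_le_of_exp_bound:
  assumes "0 < C" and bound: "\<forall>\<^sub>F t in sequentially. p t \<le> C * exp (- real t * \<rho>)"
  shows "limsup (\<lambda>t. ereal (1 / real t) * eln (p t)) \<le> ereal (- \<rho>)"
proof -
  have "\<forall>\<^sub>F t in sequentially. ereal (1 / real t) * eln (p t) \<le> ereal (ln C / real t - \<rho>)"
    using bound eventually_gt_at_top[of 0]
  proof eventually_elim
    case (elim t)
    show ?case
    proof (cases "p t \<le> 0")
      case True
      then show ?thesis using elim by (simp add: eln_def)
    next
      case False
      then have "ln (p t) \<le> ln (C * exp (- real t * \<rho>))"
        using elim \<open>0 < C\<close> by (subst ln_le_cancel_iff) auto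
      also have "\<dots> = ln C - real t * \<rho>"
        using \<open>0 < C\<close> by (simp add: ln_mult)
      finally have "ln (p t) \<le> ln C - real t * \<rho>" .
      then have "ln (p t) / real t \<le> ln C / real t - \<rho>"
        using elim by (simp add: field_simps)
      then show ?thesis using False by (simp add: eln_def)
    qed
  qed
  then have "limsup (\<lambda>t. ereal (1 / real t) * eln (p t)) \<le> limsup (\<lambda>t. ereal (ln C / real t - \<rho>))"
    by (rule Limsup_mono)
  also have "\<dots> = ereal (- \<rho>)"
    by (intro lim_imp_Limsup tendsto_ereal) (auto intro!: tendsto_eq_intros lim_const_over_n)
  finally show ?thesis .
qed

lemma eventually_le_real_mult:
  fixes a c :: real
  assumes "0 < a"
  shows "\<forall>\<^sub>F t in sequentially. c \<le> real t * a"
  using eventually_ge_at_top[of "nat \<lceil>c / a\<rceil>"]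
proof eventually_elim
  case (elim t)
  then have "c / a \<le> real t" by linarith
  then show ?case using assms by (simp add: field_simps)
qed

lemma square_div_le_square_add_div:
  fixes K a c :: real
  assumes "0 \<le> K" and "0 \<le> a" and "0 < c"
  shows "K\<^sup>2 / (c * real d) \<le> (K + a)\<^sup>2 / c"
proof -
  have "K\<^sup>2 / (c * real d) \<le> K\<^sup>2 / c"
    using assms by (cases "d = 0") (auto intro!: divide_left_mono mult_pos_pos)
  also have "\<dots> \<le> (K + a)\<^sup>2 / c"
    using assms by (intro divide_right_mono power_mono) auto
  finally show ?thesis .
qed

text \<open>Both densities are taken relative to the reference law density \<mu> fM, under which the
  density of the other one is the bounded ratio fk / fM.\<close>
lemma KL_divergence_density_bounded_ratio:
  fixes \<mu> :: "'a measure" and fk fM :: "'a \<Rightarrow> real"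
  assumes [measurable]: "fk \<in> borel_measurable \<mu>" "fM \<in> borel_measurable \<mu>"
    and pos: "\<And>x. x \<in> space \<mu> \<Longrightarrow> 0 < fk x \<and> 0 < fM x"
    and prob_k: "prob_space (density \<mu> (\<lambda>x. ennreal (fk x)))"
    and prob_M: "prob_space (density \<mu> (\<lambda>x. ennreal (fM x)))"
    and bound: "\<And>x. x \<in> space \<mu> \<Longrightarrow> \<bar>ln (fk x / fM x)\<bar> \<le> L"
  shows "KL_divergence (exp 1) (density \<mu> (\<lambda>x. ennreal (fk x))) (density \<mu> (\<lambda>x. ennreal (fM x)))
           = - integral\<^sup>L (density \<mu> (\<lambda>x. ennreal (fM x))) (\<lambda>x. ln (fk x) - ln (fM x))"
    and "0 \<le> KL_divergence (exp 1) (density \<mu> (\<lambda>x. ennreal (fk x))) (density \<mu> (\<lambda>x. ennreal (fM x)))"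
proof -
  define \<nu> where "\<nu> = density \<mu> (\<lambda>x. ennreal (fM x))"
  interpret \<nu>: prob_space \<nu> unfolding \<nu>_def by (rule prob_M)
  have [simp]: "space \<nu> = space \<mu>" and sets_\<nu>: "sets \<nu> = sets \<mu>" unfolding \<nu>_def by auto
  define \<rho> where "\<rho> x = fk x / fM x" for x
  have [measurable]: "\<rho> \<in> borel_measurable \<nu>"
    unfolding \<rho>_def by (subst measurable_cong_sets[OF sets_\<nu> refl]) simp
  have \<rho>_pos: "0 < \<rho> x" if "x \<in> space \<mu>" for x
    using pos[OF that] unfolding \<rho>_def by simp
  have ln_inv_\<rho>: "log (exp 1) (1 / \<rho> x) = - (ln (fk x) - ln (fM x))" if "x \<in> space \<mu>" for x
    using pos[OF that] by (simp add: log_def \<rho>_def ln_div)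
  have density_\<rho>: "density \<nu> (\<lambda>x. ennreal (\<rho> x)) = density \<mu> (\<lambda>x. ennreal (fk x))"
    unfolding \<nu>_def \<rho>_def using pos
    by (intro density_density_divide) (auto intro!: AE_I2 less_imp_le dest: pos)
  have density_1: "density \<nu> (\<lambda>x. ennreal ((\<lambda>_. 1::real) x)) = \<nu>"
    by (simp add: density_1)
  have "KL_divergence (exp 1) (density \<nu> (\<lambda>x. ennreal (\<rho> x))) (density \<nu> (\<lambda>x. ennreal ((\<lambda>_. 1::real) x)))
        = (\<integral>x. 1 * log (exp 1) (1 / \<rho> x) \<partial>\<nu>)"
    using \<rho>_pos by (intro \<nu>.KL_density_density) (auto intro!: AE_I2 less_imp_le dest!: \<rho>_pos)
  also have "\<dots> = - (\<integral>x. ln (fk x) - ln (fM x) \<partial>\<nu>)"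
    by (subst Bochner_Integration.integral_minus[symmetric])
      (auto intro!: Bochner_Integration.integral_cong simp: ln_inv_\<rho>)
  finally show "KL_divergence (exp 1) (density \<mu> (\<lambda>x. ennreal (fk x))) (density \<mu> (\<lambda>x. ennreal (fM x)))
           = - integral\<^sup>L (density \<mu> (\<lambda>x. ennreal (fM x))) (\<lambda>x. ln (fk x) - ln (fM x))"
    unfolding density_\<rho> density_1 unfolding \<nu>_def .
  have "0 \<le> KL_divergence (exp 1) (density \<nu> (\<lambda>x. ennreal (\<rho> x))) (density \<nu> (\<lambda>x. ennreal ((\<lambda>_. 1::real) x)))"
  proof (rule \<nu>.KL_density_density_nonneg)
    show "prob_space (density \<nu> (\<lambda>x. ennreal (\<rho> x)))" unfolding density_\<rho> by (rule prob_k)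
    show "prob_space (density \<nu> (\<lambda>x. ennreal ((\<lambda>_. 1::real) x)))"
      unfolding density_1 by (rule \<nu>.prob_space_axioms)
    show "integrable \<nu> (\<lambda>x. 1 * log (exp 1) (1 / \<rho> x))"
    proof (intro \<nu>.integrable_const_bound[of _ L] AE_I2)
      fix x assume "x \<in> space \<nu>"
      then show "norm (1 * log (exp 1) (1 / \<rho> x)) \<le> L"
        using bound[of x] pos[of x] by (simp add: ln_inv_\<rho> ln_div abs_minus_commute)
    qed simp
  qed (use \<rho>_pos in \<open>auto intro!: AE_I2 less_imp_le dest!: \<rho>_pos\<close>)
  then show "0 \<le> KL_divergence (exp 1) (density \<mu> (\<lambda>x. ennreal (fk x))) (density \<mu> (\<lambda>x. ennreal (fM x)))"
    unfolding density_\<rho> density_1 unfolding \<nu>_def .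
qed

section \<open>Beliefs along a fixed observation path\<close>

definition llr :: "(nat \<Rightarrow> nat \<Rightarrow> 'a \<Rightarrow> real) \<Rightarrow> nat \<Rightarrow> nat \<Rightarrow> nat \<Rightarrow> 'a \<Rightarrow> real" where
  "llr f M j k x = ln (f j k x) - ln (f j M x)"

text \<open>The log-likelihood ratio of the observation profile x at time u, as it is weighted in the
  beliefs of node i at time t \<ge> u.\<close>
definition propagated_llr ::
    "nat \<Rightarrow> nat \<Rightarrow> (nat \<Rightarrow> nat \<Rightarrow> real) \<Rightarrow> (nat \<Rightarrow> nat \<Rightarrow> 'a \<Rightarrow> real) \<Rightarrow> nat \<Rightarrow> nat \<Rightarrow> nat \<Rightarrow> nat
      \<Rightarrow> (nat \<Rightarrow> 'a) \<Rightarrow> real" where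
  "propagated_llr n M W f i k t u x = (\<Sum>j<n. matpow n W (Suc (t - u)) i j * llr f M j k (x j))"

lemma sum_mult_llr:
  assumes "i < n"
  shows "(\<Sum>j<n. W i j * llr f M j k (x j)) = propagated_llr n M W f i k t t x"
proof -
  have "(\<Sum>j<n. W i j * llr f M j k (x j)) = (\<Sum>j<n. W i j * (\<Sum>l<n. matpow n W 0 j l * llr f M l k (x l)))"
    by (intro sum.cong refl) (simp add: sum_matpow_0 del: matpow.simps)
  also have "\<dots> = (\<Sum>l<n. matpow n W (Suc 0) i l * llr f M l k (x l))"
    by (rule sum_mult_matpow[OF assms])
  finally show ?thesis
    unfolding propagated_llr_def by simp
qed

lemma sum_mult_propagated_llr:
  assumes "i < n" and "u \<le> t"
  shows "(\<Sum>j<n. W i j * propagated_llr n M W f j k t u x) = propagated_llr n M W f i k (Suc t) u x"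
  using sum_mult_matpow[OF assms(1), where t="Suc (t - u)" and h="\<lambda>j. llr f M j k (x j)"] assms(2)
  unfolding propagated_llr_def by (simp add: Suc_diff_le del: matpow.simps)

lemma agg_belief_pos: "1 \<le> M \<Longrightarrow> 0 < agg_belief n M W b i k"
  unfolding agg_belief_def by (auto intro!: divide_pos_pos sum_pos)

lemma sum_agg_belief: "1 \<le> M \<Longrightarrow> (\<Sum>k\<in>{1..M}. agg_belief n M W b i k) = 1"
  unfolding agg_belief_def
  by (simp add: sum_divide_distrib[symmetric] sum_pos order.strict_implies_not_eq[symmetric])

lemma ln_agg_belief_ratio:
  assumes "1 \<le> M"
  shows "ln (agg_belief n M W b i k) - ln (agg_belief n M W b i M)
           = (\<Sum>j<n. W i j * (ln (b j k) - ln (b j M)))"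
proof -
  have "0 < (\<Sum>a\<in>{1..M}. exp (\<Sum>j<n. W i j * ln (b j a)))"
    using assms by (intro sum_pos) auto
  then show ?thesis
    unfolding agg_belief_def by (simp add: ln_div sum_subtractf right_diff_distrib)
qed

lemma ln_priv_belief_ratio:
  assumes "k \<in> {1..M}" and pos: "\<And>a. a \<in> {1..M} \<Longrightarrow> 0 < f j a (x j) \<and> 0 < q j a"
  shows "ln (priv_belief M f q x j k) - ln (priv_belief M f q x j M)
           = llr f M j k (x j) + (ln (q j k) - ln (q j M))"
proof -
  have "M \<in> {1..M}" using assms(1) by auto
  moreover have "0 < (\<Sum>a\<in>{1..M}. f j a (x j) * q j a)"
    using assms(1) pos by (intro sum_pos) (auto intro: mult_pos_pos)
  ultimately show ?thesis
    unfolding priv_belief_def llr_def using pos[OF assms(1)] pos[of M]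
    by (simp add: ln_div ln_mult)
qed

locale belief_process =
  fixes n M :: nat and W :: "nat \<Rightarrow> nat \<Rightarrow> real" and f :: "nat \<Rightarrow> nat \<Rightarrow> 'a \<Rightarrow> real"
    and q0 :: "nat \<Rightarrow> nat \<Rightarrow> real" and xs :: "nat \<Rightarrow> nat \<Rightarrow> 'a"
  assumes M_pos: "1 \<le> M"
    and q0_pos: "\<And>j k. j < n \<Longrightarrow> k \<in> {1..M} \<Longrightarrow> 0 < q0 j k"
    and f_pos: "\<And>j k s. j < n \<Longrightarrow> k \<in> {1..M} \<Longrightarrow> 1 \<le> s \<Longrightarrow> 0 < f j k (xs s j)"
begin

lemma belief_pos: "j < n \<Longrightarrow> k \<in> {1..M} \<Longrightarrow> 0 < belief n M W f q0 xs t j k"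
  by (cases t) (auto simp: q0_pos agg_belief_pos M_pos)

lemma sum_belief: "1 \<le> t \<Longrightarrow> (\<Sum>k\<in>{1..M}. belief n M W f q0 xs t i k) = 1"
  using sum_agg_belief[OF M_pos] by (cases t) auto

lemma ln_belief_ratio_Suc:
  assumes "k \<in> {1..M}"
  shows "ln (belief n M W f q0 xs (Suc t) i k) - ln (belief n M W f q0 xs (Suc t) i M)
           = (\<Sum>j<n. W i j * (llr f M j k (xs (Suc t) j)
                + (ln (belief n M W f q0 xs t j k) - ln (belief n M W f q0 xs t j M))))"
proof -
  have "ln (priv_belief M f (belief n M W f q0 xs t) (xs (Suc t)) j k)
          - ln (priv_belief M f (belief n M W f q0 xs t) (xs (Suc t)) j M)
        = llr f M j k (xs (Suc t) j) + (ln (belief n M W f q0 xs t j k) - ln (belief n M W f q0 xs t j M))"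
    if "j < n" for j
    using f_pos[OF that] belief_pos[OF that] by (intro ln_priv_belief_ratio[OF assms]) auto
  then show ?thesis
    unfolding belief.simps ln_agg_belief_ratio[OF M_pos] by (intro sum.cong) auto
qed

lemma ln_belief_ratio:
  assumes "k \<in> {1..M}" and "i < n"
  shows "ln (belief n M W f q0 xs t i k) - ln (belief n M W f q0 xs t i M)
           = (\<Sum>u\<in>{1..t}. propagated_llr n M W f i k t u (xs u))
             + (\<Sum>j<n. matpow n W t i j * (ln (q0 j k) - ln (q0 j M)))"
  using assms(2)
proof (induction t arbitrary: i)
  case 0
  then show ?case using sum_matpow_0[where W=W] by simp
next
  case (Suc t)
  have "(\<Sum>j<n. W i j * (\<Sum>u\<in>{1..t}. propagated_llr n M W f j k t u (xs u)))
      = (\<Sum>u\<in>{1..t}. \<Sum>j<n. W i j * propagated_llr n M W f j k t u (xs u))"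
    by (simp add: sum_distrib_left) (rule sum.swap)
  also have "\<dots> = (\<Sum>u\<in>{1..t}. propagated_llr n M W f i k (Suc t) u (xs u))"
    using Suc.prems by (intro sum.cong) (auto simp: sum_mult_propagated_llr)
  finally have observations: "(\<Sum>j<n. W i j * (\<Sum>u\<in>{1..t}. propagated_llr n M W f j k t u (xs u)))
      = (\<Sum>u\<in>{1..t}. propagated_llr n M W f i k (Suc t) u (xs u))" .
  have "ln (belief n M W f q0 xs (Suc t) i k) - ln (belief n M W f q0 xs (Suc t) i M)
      = (\<Sum>j<n. W i j * llr f M j k (xs (Suc t) j))
        + (\<Sum>j<n. W i j * (\<Sum>u\<in>{1..t}. propagated_llr n M W f j k t u (xs u)))
        + (\<Sum>j<n. W i j * (\<Sum>l<n. matpow n W t j l * (ln (q0 l k) - ln (q0 l M))))"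
    unfolding ln_belief_ratio_Suc[OF assms(1)] sum.distrib[symmetric] distrib_left[symmetric]
    using Suc.IH by (intro sum.cong) (auto simp: algebra_simps)
  also have "\<dots> = (\<Sum>u\<in>{1..Suc t}. propagated_llr n M W f i k (Suc t) u (xs u))
        + (\<Sum>j<n. matpow n W (Suc t) i j * (ln (q0 j k) - ln (q0 j M)))"
    using sum_mult_matpow[OF Suc.prems, where t=t and h="\<lambda>l. ln (q0 l k) - ln (q0 l M)"]
    unfolding observations sum_mult_llr[OF Suc.prems, where t="Suc t"] by (simp del: matpow.simps)
  finally show ?case .
qed

end

text \<open>If the true hypothesis has belief at most 1/2, some false one k keeps belief at least
  1/(2(M-1)); the closed form of its log-ratio then bounds -ln q.\<close>
lemma (in belief_process) neg_ln_true_belief_le: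
  assumes "row_stochastic n W" and M: "2 \<le> M" and "i < n" and "1 \<le> t" and small: "belief n M W f q0 xs t i M \<le> 1/2"
  obtains k where "k \<in> {1..M-1}"
    and "- ln (belief n M W f q0 xs t i M)
           \<le> (\<Sum>u\<in>{1..t}. propagated_llr n M W f i k t u (xs u))
             + (ln (2 * real (M - 1)) + (\<Sum>j<n. \<bar>ln (q0 j k) - ln (q0 j M)\<bar>))"
proof -
  interpret stochastic_matrix n W by unfold_locales (rule assms(1))
  define q where "q k = belief n M W f q0 xs t i k" for k
  have q_pos: "0 < q k" if "k \<in> {1..M}" for k
    unfolding q_def using belief_pos[OF \<open>i < n\<close> that] .
  have "{1..M} = insert M {1..M-1}" using M by auto
  then have "(\<Sum>k\<in>{1..M}. q k) = q M + (\<Sum>k\<in>{1..M-1}. q k)"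
    by (subst sum.insert[symmetric]) auto
  then have "(\<Sum>k\<in>{1..M-1}. q k) = 1 - q M"
    using sum_belief[OF \<open>1 \<le> t\<close>] unfolding q_def by simp
  moreover have "{1..M-1} \<noteq> {}" using M by simp
  then obtain k where k: "k \<in> {1..M-1}" and "sum q {1..M-1} / card {1..M-1} \<le> q k"
    using exists_ge_average[OF finite_atLeastAtMost] by blast
  ultimately have "1 / (2 * real (M - 1)) \<le> q k"
    using small M unfolding q_def by (simp add: divide_simps algebra_simps)
  then have "ln (1 / (2 * real (M - 1))) \<le> ln (q k)"
    using M by (intro ln_mono) auto
  then have "- ln (2 * real (M - 1)) \<le> ln (q k)"
    using M by (simp add: ln_div)
  moreover have "ln (q k) - ln (q M)
      = (\<Sum>u\<in>{1..t}. propagated_llr n M W f i k t u (xs u))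
        + (\<Sum>j<n. matpow n W t i j * (ln (q0 j k) - ln (q0 j M)))"
    unfolding q_def using k \<open>i < n\<close> by (intro ln_belief_ratio) auto
  moreover have "(\<Sum>j<n. matpow n W t i j * (ln (q0 j k) - ln (q0 j M))) \<le> (\<Sum>j<n. \<bar>ln (q0 j k) - ln (q0 j M)\<bar>)"
    using abs_sum_matpow_le_sum_abs[OF \<open>i < n\<close>] by (rule abs_le_D1)
  ultimately show ?thesis
    by (intro that[OF k]) (simp add: q_def)
qed

section \<open>Large deviations of the belief in the true hypothesis\<close>

locale social_learning = irreducible_stochastic_matrix n W + P: prob_space P
  for n :: nat and W :: "nat \<Rightarrow> nat \<Rightarrow> real" and P :: "'w measure" +
  fixes M :: nat and \<mu> :: "nat \<Rightarrow> 'a measure" and f :: "nat \<Rightarrow> nat \<Rightarrow> 'a \<Rightarrow> real"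
    and Q :: "(nat \<Rightarrow> 'a) measure" and X :: "nat \<Rightarrow> 'w \<Rightarrow> (nat \<Rightarrow> 'a)"
    and q0 :: "nat \<Rightarrow> nat \<Rightarrow> real" and v :: "nat \<Rightarrow> real" and L :: real
  assumes M_ge_2: "2 \<le> M"
    and dens_meas: "\<And>j k. j < n \<Longrightarrow> k \<in> {1..M} \<Longrightarrow> f j k \<in> borel_measurable (\<mu> j)"
    and dens_prob: "\<And>j k. j < n \<Longrightarrow> k \<in> {1..M} \<Longrightarrow> prob_space (density (\<mu> j) (\<lambda>x. ennreal (f j k x)))"
    and Q_sets: "sets Q = sets (Pi\<^sub>M {..<n} \<mu>)"
    and Q_marg: "\<And>j. j < n \<Longrightarrow> distr Q (\<mu> j) (\<lambda>y. y j) = density (\<mu> j) (\<lambda>x. ennreal (f j M x))"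
    and X_indep: "P.indep_vars (\<lambda>_. Pi\<^sub>M {..<n} \<mu>) X {1..}"
    and X_law: "\<And>t. 1 \<le> t \<Longrightarrow> distr P (Pi\<^sub>M {..<n} \<mu>) (X t) = Q"
    and q0_pos: "\<And>j k. j < n \<Longrightarrow> k \<in> {1..M} \<Longrightarrow> 0 < q0 j k"
    and L_pos: "0 < L"
    and dens_bounded: "\<And>j a b x. j < n \<Longrightarrow> a \<in> {1..M} \<Longrightarrow> b \<in> {1..M} \<Longrightarrow> x \<in> space (\<mu> j) \<Longrightarrow>
               0 < f j a x \<and> \<bar>ln (f j a x / f j b x)\<bar> \<le> L"
    and stationary: "stationary_dist n W v"
begin

lemma M_in_range: "M \<in> {1..M}"
  using M_ge_2 by simp

lemma X_measurable: "1 \<le> s \<Longrightarrow> X s \<in> measurable P (Pi\<^sub>M {..<n} \<mu>)"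
  using X_indep unfolding P.indep_vars_def by auto

lemma X_in_space: "1 \<le> s \<Longrightarrow> \<omega> \<in> space P \<Longrightarrow> j < n \<Longrightarrow> X s \<omega> j \<in> space (\<mu> j)"
  using measurable_space[OF X_measurable] by (auto simp: space_PiM)

lemma belief_process_path:
  assumes "\<omega> \<in> space P"
  shows "belief_process n M f q0 (\<lambda>s. X s \<omega>)"
proof
  show "1 \<le> M" using M_ge_2 by simp
  show "0 < q0 j k" if "j < n" "k \<in> {1..M}" for j k using q0_pos that .
  show "0 < f j k (X s \<omega> j)" if "j < n" "k \<in> {1..M}" "1 \<le> s" for j k s
    using dens_bounded[OF that(1,2,2) X_in_space[OF that(3) assms that(1)]] by simp
qed

lemma llr_bounded:
  assumes "j < n" and "k \<in> {1..M}" and "x \<in> space (\<mu> j)"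
  shows "\<bar>llr f M j k x\<bar> \<le> L"
  using dens_bounded[OF assms(1,2) M_in_range assms(3)] dens_bounded[OF assms(1) M_in_range M_in_range assms(3)]
  by (auto simp: llr_def ln_div)

lemma llr_measurable [measurable]:
  "j < n \<Longrightarrow> k \<in> {1..M} \<Longrightarrow> llr f M j k \<in> borel_measurable (\<mu> j)"
  unfolding llr_def[abs_def] using dens_meas[of j k] dens_meas[OF _ M_in_range, of j] by measurable

lemma llr_component_measurable [measurable]:
  assumes "j < n" and "k \<in> {1..M}"
  shows "(\<lambda>x. llr f M j k (x j)) \<in> borel_measurable (Pi\<^sub>M {..<n} \<mu>)"
  using measurable_compose[OF measurable_component_singleton[of j "{..<n}" \<mu>] llr_measurable[OF assms]] assms(1)
  by simp

lemma KLD_eq_neg_integral_llr: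
  assumes "j < n" and "k \<in> {1..M}"
  shows "KLD \<mu> f j M k = - integral\<^sup>L (density (\<mu> j) (\<lambda>x. ennreal (f j M x))) (llr f M j k)"
    and KLD_nonneg: "0 \<le> KLD \<mu> f j M k"
  using KL_divergence_density_bounded_ratio[OF dens_meas[OF assms] dens_meas[OF assms(1) M_in_range] _
      dens_prob[OF assms] dens_prob[OF assms(1) M_in_range]]
    dens_bounded[OF assms(1) assms(2) M_in_range] dens_bounded[OF assms(1) M_in_range M_in_range]
  unfolding KLD_def llr_def[abs_def] by auto

lemma expectation_llr:
  assumes "1 \<le> u" and "j < n" and "k \<in> {1..M}"
  shows "P.expectation (\<lambda>\<omega>. llr f M j k (X u \<omega> j)) = - KLD \<mu> f j M k"
proof -
  have proj: "(\<lambda>y. y j) \<in> measurable (Pi\<^sub>M {..<n} \<mu>) (\<mu> j)"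
    using assms(2) by simp
  have "P.expectation (\<lambda>\<omega>. llr f M j k (X u \<omega> j))
      = integral\<^sup>L (distr P (Pi\<^sub>M {..<n} \<mu>) (X u)) (\<lambda>y. llr f M j k (y j))"
    using proj assms by (intro integral_distr[symmetric] X_measurable) auto
  also have "\<dots> = integral\<^sup>L Q (\<lambda>y. llr f M j k (y j))"
    using X_law[OF assms(1)] by simp
  also have "\<dots> = integral\<^sup>L (distr Q (\<mu> j) (\<lambda>y. y j)) (llr f M j k)"
    using proj assms by (intro integral_distr[symmetric]) (simp_all add: measurable_cong_sets[OF Q_sets refl])
  also have "\<dots> = - KLD \<mu> f j M k"
    using Q_marg KLD_eq_neg_integral_llr assms by simp
  finally show ?thesis .
qed

lemma propagated_llr_measurable [measurable]:
  "k \<in> {1..M} \<Longrightarrow> propagated_llr n M W f i k t u \<in> borel_measurable (Pi\<^sub>M {..<n} \<mu>)"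
  unfolding propagated_llr_def[abs_def] by (auto intro!: borel_measurable_sum borel_measurable_times)

lemma propagated_llr_bounded:
  assumes "i < n" and "k \<in> {1..M}" and "x \<in> space (Pi\<^sub>M {..<n} \<mu>)"
  shows "\<bar>propagated_llr n M W f i k t u x\<bar> \<le> L"
  unfolding propagated_llr_def
  using assms by (intro abs_sum_matpow_le llr_bounded) (auto simp: space_PiM)

lemma expectation_propagated_llr:
  assumes "1 \<le> u" and "k \<in> {1..M}"
  shows "P.expectation (\<lambda>\<omega>. propagated_llr n M W f i k t u (X u \<omega>))
           = - (\<Sum>j<n. matpow n W (Suc (t - u)) i j * KLD \<mu> f j M k)"
proof -
  have [measurable]: "(\<lambda>\<omega>. llr f M j k (X u \<omega> j)) \<in> borel_measurable P" if "j < n" for j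
    using measurable_compose[OF X_measurable[OF assms(1)] llr_component_measurable[OF that assms(2)]] .
  have "integrable P (\<lambda>\<omega>. llr f M j k (X u \<omega> j))" if "j < n" for j
    using that assms llr_bounded X_in_space
    by (intro P.integrable_const_bound[of _ L] AE_I2) auto
  then have "P.expectation (\<lambda>\<omega>. propagated_llr n M W f i k t u (X u \<omega>))
      = (\<Sum>j<n. matpow n W (Suc (t - u)) i j * P.expectation (\<lambda>\<omega>. llr f M j k (X u \<omega> j)))"
    unfolding propagated_llr_def by (subst Bochner_Integration.integral_sum) auto
  then show ?thesis
    using expectation_llr[OF assms(1) _ assms(2)] by (simp add: sum_negf)
qed

lemma prob_sum_propagated_llr_ge:
  assumes "i < n" and "k \<in> {1..M}" and "1 \<le> t" and "0 \<le> \<epsilon>"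
  shows "P.prob {\<omega> \<in> space P. - (real t * cesaro_avg n W (\<lambda>j. KLD \<mu> f j M k) t i) + \<epsilon>
                   \<le> (\<Sum>u\<in>{1..t}. propagated_llr n M W f i k t u (X u \<omega>))}
           \<le> exp (- \<epsilon>\<^sup>2 / (2 * real t * L\<^sup>2))"
proof -
  define Y where "Y u \<omega> = propagated_llr n M W f i k t u (X u \<omega>)" for u \<omega>
  define m where "m = (\<Sum>u\<in>{1..t}. P.expectation (Y u))"
  have m: "m = - (real t * cesaro_avg n W (\<lambda>j. KLD \<mu> f j M k) t i)"
    unfolding m_def Y_def sum_matpow_reversed_eq_cesaro_avg[symmetric]
    using expectation_propagated_llr[OF _ assms(2)] by (simp add: sum_negf)
  interpret Hoeffding_ineq P "{1..t}" Y "\<lambda>_. - L" "\<lambda>_. L" m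
  proof unfold_locales
    have "P.indep_vars (\<lambda>_. borel) (\<lambda>u \<omega>. propagated_llr n M W f i k t u (X u \<omega>)) {1..t}"
      using assms(2) by (intro P.indep_vars_compose2[OF P.indep_vars_subset[OF X_indep]]) auto
    then show "P.indep_vars (\<lambda>_. borel) Y {1..t}" unfolding Y_def .
    show "AE \<omega> in P. Y u \<omega> \<in> {- L..L}" if "u \<in> {1..t}" for u
    proof (rule AE_I2)
      fix \<omega> assume "\<omega> \<in> space P"
      then have "\<bar>Y u \<omega>\<bar> \<le> L"
        using that measurable_space[OF X_measurable] unfolding Y_def
        by (intro propagated_llr_bounded[OF assms(1,2)]) auto
      then show "Y u \<omega> \<in> {- L..L}" by auto
    qed
  qed (simp_all add: m_def)
  have "P.prob {\<omega> \<in> space P. m + \<epsilon> \<le> (\<Sum>u\<in>{1..t}. Y u \<omega>)} \<le> exp (- 2 * \<epsilon>\<^sup>2 / (\<Sum>u\<in>{1..t}. (L - - L)\<^sup>2))"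
    using assms(3,4) L_pos by (intro Hoeffding_ineq_ge) auto
  also have "(\<Sum>u\<in>{1..t}. (L - - L)\<^sup>2) = 4 * real t * L\<^sup>2"
    by (simp add: power2_eq_square)
  finally show ?thesis
    unfolding m Y_def by (simp add: power2_eq_square mult_ac)
qed

lemma Kdiv_nonneg: "k \<in> {1..M} \<Longrightarrow> 0 \<le> Kdiv n v \<mu> f M k"
  using stationary KLD_nonneg
  unfolding Kdiv_def stationary_dist_def by (auto intro!: sum_nonneg mult_nonneg_nonneg)

lemma eventually_prob_sum_propagated_llr_ge:
  assumes "i < n" and "k \<in> {1..M}" and "0 < \<alpha>"
  shows "\<forall>\<^sub>F t in sequentially.
           P.prob {\<omega> \<in> space P. \<alpha> * real t - c \<le> (\<Sum>u\<in>{1..t}. propagated_llr n M W f i k t u (X u \<omega>))}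
             \<le> exp (- real t * ((Kdiv n v \<mu> f M k + \<alpha>/2)\<^sup>2 / (2 * L\<^sup>2)))"
proof -
  define K where "K = Kdiv n v \<mu> f M k"
  define A where "A t = cesaro_avg n W (\<lambda>j. KLD \<mu> f j M k) t i" for t
  have "\<forall>\<^sub>F t in sequentially. K - \<alpha>/4 \<le> A t"
    unfolding K_def A_def Kdiv_def using assms
    by (intro cesaro_avg_eventually_ge[OF stationary]) auto
  moreover have "\<forall>\<^sub>F t in sequentially. c \<le> real t * (\<alpha>/4)"
    using \<open>0 < \<alpha>\<close> by (intro eventually_le_real_mult) simp
  ultimately show ?thesis
    using eventually_ge_at_top[of 1]
  proof eventually_elim
    case (elim t)
    define \<epsilon> where "\<epsilon> = \<alpha> * real t - c + real t * A t"
    have "real t * (K - \<alpha>/4) \<le> real t * A t"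
      using elim(1) by (intro mult_left_mono) auto
    then have "real t * (K + \<alpha>/2) \<le> \<epsilon>"
      using elim(2) unfolding \<epsilon>_def by (simp add: algebra_simps)
    moreover have "0 \<le> real t * (K + \<alpha>/2)"
      using Kdiv_nonneg[OF assms(2)] \<open>0 < \<alpha>\<close> unfolding K_def by simp
    ultimately have "(real t * (K + \<alpha>/2))\<^sup>2 \<le> \<epsilon>\<^sup>2" and "0 \<le> \<epsilon>"
      by (auto intro: power_mono)
    have "P.prob {\<omega> \<in> space P. \<alpha> * real t - c \<le> (\<Sum>u\<in>{1..t}. propagated_llr n M W f i k t u (X u \<omega>))}
        \<le> exp (- \<epsilon>\<^sup>2 / (2 * real t * L\<^sup>2))"
      using prob_sum_propagated_llr_ge[OF assms(1,2) \<open>1 \<le> t\<close> \<open>0 \<le> \<epsilon>\<close>]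
      unfolding \<epsilon>_def A_def by simp
    also have "\<dots> \<le> exp (- real t * ((K + \<alpha>/2)\<^sup>2 / (2 * L\<^sup>2)))"
    proof -
      have "real t * ((K + \<alpha>/2)\<^sup>2 / (2 * L\<^sup>2)) = (real t * (K + \<alpha>/2))\<^sup>2 / (2 * real t * L\<^sup>2)"
        using \<open>1 \<le> t\<close> L_pos by (simp add: field_simps power2_eq_square)
      also have "\<dots> \<le> \<epsilon>\<^sup>2 / (2 * real t * L\<^sup>2)"
        using \<open>(real t * (K + \<alpha>/2))\<^sup>2 \<le> \<epsilon>\<^sup>2\<close> by (intro divide_right_mono) auto
      finally show ?thesis by simp
    qed
    finally show ?case unfolding K_def .
  qed
qed

definition initial_offset :: "nat \<Rightarrow> real" where
  "initial_offset k = ln (2 * real (M - 1)) + (\<Sum>j<n. \<bar>ln (q0 j k) - ln (q0 j M)\<bar>)"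

lemma true_belief_small_subset:
  assumes "i < n" and "1 \<le> t" and "exp (- \<alpha> * real t) \<le> 1/2"
  shows "{\<omega> \<in> space P. \<alpha> \<le> - (1 / real t) * ln (belief n M W f q0 (\<lambda>s. X s \<omega>) t i M)}
           \<subseteq> (\<Union>k\<in>{1..M-1}. {\<omega> \<in> space P.
                \<alpha> * real t - initial_offset k \<le> (\<Sum>u\<in>{1..t}. propagated_llr n M W f i k t u (X u \<omega>))})"
proof safe
  fix \<omega> assume \<omega>: "\<omega> \<in> space P" and "\<alpha> \<le> - (1 / real t) * ln (belief n M W f q0 (\<lambda>s. X s \<omega>) t i M)"
  interpret belief_process n M W f q0 "\<lambda>s. X s \<omega>"
    using belief_process_path[OF \<omega>] .
  have "\<alpha> * real t \<le> - ln (belief n M W f q0 (\<lambda>s. X s \<omega>) t i M)" (is "_ \<le> - ln ?q")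
    using \<open>\<alpha> \<le> _\<close> \<open>1 \<le> t\<close> by (simp add: field_simps)
  then have "?q \<le> exp (- \<alpha> * real t)"
    using belief_pos[OF \<open>i < n\<close> M_in_range] by (simp add: ln_ge_iff[symmetric] ln_le_cancel_iff[symmetric])
  then obtain k where "k \<in> {1..M-1}"
    and "- ln ?q \<le> (\<Sum>u\<in>{1..t}. propagated_llr n M W f i k t u (X u \<omega>)) + initial_offset k"
    using neg_ln_true_belief_le[OF row_stochastic M_ge_2 \<open>i < n\<close> \<open>1 \<le> t\<close>] assms(3)
    unfolding initial_offset_def by force
  with \<open>\<alpha> * real t \<le> - ln ?q\<close> \<omega> show "\<omega> \<in> (\<Union>k\<in>{1..M-1}. {\<omega> \<in> space P.
      \<alpha> * real t - initial_offset k \<le> (\<Sum>u\<in>{1..t}. propagated_llr n M W f i k t u (X u \<omega>))})"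
    by force
qed

lemma eventually_prob_true_belief_small:
  assumes "i < n" and "0 < \<alpha>"
    and rate: "\<And>k. k \<in> {1..M-1} \<Longrightarrow> \<rho> \<le> (Kdiv n v \<mu> f M k + \<alpha>/2)\<^sup>2 / (2 * L\<^sup>2)"
  shows "\<forall>\<^sub>F t in sequentially.
           P.prob {\<omega> \<in> space P. \<alpha> \<le> - (1 / real t) * ln (belief n M W f q0 (\<lambda>s. X s \<omega>) t i M)}
             \<le> real (M - 1) * exp (- real t * \<rho>)"
proof -
  define B where "B t k = {\<omega> \<in> space P.
      \<alpha> * real t - initial_offset k \<le> (\<Sum>u\<in>{1..t}. propagated_llr n M W f i k t u (X u \<omega>))}" for t k
  have B_sets: "B t k \<in> P.events" if "k \<in> {1..M-1}" for t k
  proof -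
    have "(\<lambda>\<omega>. propagated_llr n M W f i k t u (X u \<omega>)) \<in> borel_measurable P" if "u \<in> {1..t}" for u
      using \<open>k \<in> {1..M-1}\<close> that by (intro measurable_compose[OF X_measurable propagated_llr_measurable]) auto
    then show ?thesis unfolding B_def by measurable
  qed
  have "\<forall>\<^sub>F t in sequentially. \<forall>k\<in>{1..M-1}. P.prob (B t k) \<le> exp (- real t * \<rho>)"
  proof (intro eventually_ball_finite ballI)
    fix k assume k: "k \<in> {1..M-1}"
    then have "k \<in> {1..M}" by auto
    show "\<forall>\<^sub>F t in sequentially. P.prob (B t k) \<le> exp (- real t * \<rho>)"
      using eventually_prob_sum_propagated_llr_ge[OF \<open>i < n\<close> \<open>k \<in> {1..M}\<close> \<open>0 < \<alpha>\<close>, of "initial_offset k"]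
    proof eventually_elim
      case (elim t)
      have "real t * \<rho> \<le> real t * ((Kdiv n v \<mu> f M k + \<alpha>/2)\<^sup>2 / (2 * L\<^sup>2))"
        using rate[OF k] by (intro mult_left_mono) auto
      then have "exp (- real t * ((Kdiv n v \<mu> f M k + \<alpha>/2)\<^sup>2 / (2 * L\<^sup>2))) \<le> exp (- real t * \<rho>)"
        by simp
      then show ?case using elim unfolding B_def by linarith
    qed
  qed simp
  moreover have "\<forall>\<^sub>F t in sequentially. exp (- \<alpha> * real t) \<le> 1/2"
    using eventually_le_real_mult[OF \<open>0 < \<alpha>\<close>, of "ln 2"]
  proof eventually_elim
    case (elim t)
    then have "exp (- \<alpha> * real t) \<le> exp (- ln 2)" by (simp add: mult.commute)
    then show ?case by (simp add: exp_minus)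
  qed
  ultimately show ?thesis
    using eventually_ge_at_top[of 1]
  proof eventually_elim
    case (elim t)
    let ?E = "{\<omega> \<in> space P. \<alpha> \<le> - (1 / real t) * ln (belief n M W f q0 (\<lambda>s. X s \<omega>) t i M)}"
    have "P.prob ?E \<le> P.prob (\<Union>k\<in>{1..M-1}. B t k)"
      using true_belief_small_subset[OF \<open>i < n\<close> elim(3,2)] B_sets unfolding B_def
      by (cases "?E \<in> P.events") (auto intro!: P.finite_measure_mono simp: measure_notin_sets)
    also have "\<dots> \<le> (\<Sum>k\<in>{1..M-1}. P.prob (B t k))"
      using B_sets by (intro P.finite_measure_subadditive_finite) auto
    also have "\<dots> \<le> (\<Sum>k\<in>{1..M-1}. exp (- real t * \<rho>))"
      using elim(1) by (intro sum_mono) auto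
    finally show ?case by simp
  qed
qed

theorem limsup_rate_true_belief:
  assumes "i < n" and "0 < \<alpha>"
  shows "limsup (\<lambda>t. ereal (1 / real t) *
            eln (measure P {\<omega> \<in> space P.
                  - (1 / real t) * ln (belief n M W f q0 (\<lambda>s. X s \<omega>) t i M) \<ge> \<alpha>}))
         \<le> ereal (- Min ((\<lambda>k. (Kdiv n v \<mu> f M k)\<^sup>2 / (2 * L\<^sup>2 * real (chain_period n W))) ` {1..M - 1}))"
proof (rule limsup_eln_le_of_exp_bound[OF _ eventually_prob_true_belief_small[OF assms]])
  show "0 < real (M - 1)" using M_ge_2 by simp
  fix k assume "k \<in> {1..M - 1}"
  then have "Min ((\<lambda>k. (Kdiv n v \<mu> f M k)\<^sup>2 / (2 * L\<^sup>2 * real (chain_period n W))) ` {1..M - 1})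
      \<le> (Kdiv n v \<mu> f M k)\<^sup>2 / (2 * L\<^sup>2 * real (chain_period n W))"
    by (intro Min_le) auto
  also have "\<dots> \<le> (Kdiv n v \<mu> f M k + \<alpha>/2)\<^sup>2 / (2 * L\<^sup>2)"
    using \<open>k \<in> {1..M - 1}\<close> \<open>0 < \<alpha>\<close> L_pos
    by (intro square_div_le_square_add_div Kdiv_nonneg) auto
  finally show "Min ((\<lambda>k. (Kdiv n v \<mu> f M k)\<^sup>2 / (2 * L\<^sup>2 * real (chain_period n W))) ` {1..M - 1})
      \<le> (Kdiv n v \<mu> f M k + \<alpha>/2)\<^sup>2 / (2 * L\<^sup>2)" .
qed

end

theorem lemma2:
  fixes n M :: nat
    and W :: "nat \<Rightarrow> nat \<Rightarrow> real"
    and \<mu> :: "nat \<Rightarrow> 'a measure"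
    and f :: "nat \<Rightarrow> nat \<Rightarrow> 'a \<Rightarrow> real"
    and Q :: "(nat \<Rightarrow> 'a) measure"
    and P :: "'w measure"
    and X :: "nat \<Rightarrow> 'w \<Rightarrow> (nat \<Rightarrow> 'a)"
    and q0 :: "nat \<Rightarrow> nat \<Rightarrow> real"
    and v :: "nat \<Rightarrow> real"
    and L \<alpha> :: real
    and i :: nat
  assumes M2: "2 \<le> M"
    and dens_meas: "\<And>j k. j < n \<Longrightarrow> k \<in> {1..M} \<Longrightarrow> f j k \<in> borel_measurable (\<mu> j)"
    and dens_nonneg: "\<And>j k x. j < n \<Longrightarrow> k \<in> {1..M} \<Longrightarrow> x \<in> space (\<mu> j) \<Longrightarrow> 0 \<le> f j k x"
    and dens_prob: "\<And>j k. j < n \<Longrightarrow> k \<in> {1..M} \<Longrightarrow>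
                       prob_space (density (\<mu> j) (\<lambda>x. ennreal (f j k x)))"
    and Q_sets: "sets Q = sets (Pi\<^sub>M {..<n} \<mu>)"
    and Q_prob: "prob_space Q"
    and Q_marg: "\<And>j. j < n \<Longrightarrow>
                   distr Q (\<mu> j) (\<lambda>y. y j) = density (\<mu> j) (\<lambda>x. ennreal (f j M x))"
    and P_prob: "prob_space P"
    and X_indep: "prob_space.indep_vars P (\<lambda>_. Pi\<^sub>M {..<n} \<mu>) X {1..}"
    and X_law: "\<And>t. 1 \<le> t \<Longrightarrow> distr P (Pi\<^sub>M {..<n} \<mu>) (X t) = Q"
    and W_stoch: "row_stochastic n W"
    and A1: "\<And>k j. k \<in> {1..M} \<Longrightarrow> j \<in> {1..M} \<Longrightarrow> k \<noteq> j \<Longrightarrow>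
               \<exists>l<n. 0 < KLD \<mu> f l k j"
    and A2: "irreducible_mat n W"
    and A3: "\<And>j k. j < n \<Longrightarrow> k \<in> {1..M} \<Longrightarrow> 0 < q0 j k"
    and q0_prob: "\<And>j. j < n \<Longrightarrow> (\<Sum>k\<in>{1..M}. q0 j k) = 1"
    and A4_pos: "0 < L"
    and A4: "\<And>j a b x. j < n \<Longrightarrow> a \<in> {1..M} \<Longrightarrow> b \<in> {1..M} \<Longrightarrow> x \<in> space (\<mu> j) \<Longrightarrow>
               0 < f j a x \<and> \<bar>ln (f j a x / f j b x)\<bar> \<le> L"
    and v_stat: "stationary_dist n W v"
    and i_node: "i < n"
    and \<alpha>_pos: "0 < \<alpha>"
  shows "limsup (\<lambda>t. ereal (1 / real t) *
            eln (measure P {\<omega> \<in> space P.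
                  - (1 / real t) * ln (belief n M W f q0 (\<lambda>s. X s \<omega>) t i M) \<ge> \<alpha>}))
         \<le> ereal (- Min ((\<lambda>k. (Kdiv n v \<mu> f M k)\<^sup>2 / (2 * L\<^sup>2 * real (chain_period n W))) ` {1..M - 1}))"
proof -
  interpret social_learning n W P M \<mu> f Q X q0 v L
    by (intro social_learning.intro irreducible_stochastic_matrix.intro stochastic_matrix.intro
        irreducible_stochastic_matrix_axioms.intro social_learning_axioms.intro) (fact assms)+
  show ?thesis using limsup_rate_true_belief[OF i_node \<alpha>_pos] .
qed

end
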